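(* Let $L:(0,\infty)\to(0,\infty)$ be an $L$-function (see context) and let $U=\{D(z_n,r_n)\}_n$ be an $L$-set. Let $\phi\in[0,2\pi]$. Then the set $C\subset(0,\infty)$ of those $c>0$ for which the boundary $\partial\Lambda(L,\phi,c)$ intersects infinitely many of the discs $D(z_n,r_n)$ has Lebesgue measure zero. Moreover, the projection $E$ of $U$ onto $[1,\infty)$ satisfies $\int_E\frac{dx}{L(x)}<\infty$.
   Context: An $L$-function is a strictly decreasing, continuous, convex function $L:(0,\infty)\to(0,\infty)$ with $L(x)\to0^+$ as $x\to\infty$, satisfying: there exist constants $\beta\in(0,1)$ and $R\ge1$ such that $L(2x)\ge\beta L(x)$ for all $x\ge R$. $D(z_0,r)=\{z:|z-z_0|<r\}$. An $L$-set is a countable collection of discs $D(z_n,r_n)$ with $z_n\in\mathbb{C}$, $|z_n|\to\infty$, $r_n>0$ and $\sum_n\frac{r_n}{L(|z_n|)}<\infty$. For $\phi\in[0,2\pi]$, $c>0$: $\Lambda(L,\phi,c)=\{z\in\mathbb{C}: |\operatorname{Im}(ze^{-i\phi})|\le cL(\operatorname{Re}(ze^{-i\phi})),\ \operatorname{Re}(ze^{-i\phi})\ge R\}$. The projection of $U$ onto $[1,\infty)$ is $E=\{|z|: z\in\bigcup_n D(z_n,r_n)\}\cap[1,\infty)$. *)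

theory Defs
  imports "HOL-Analysis.Analysis"
begin

definition L_function :: "(real \<Rightarrow> real) \<Rightarrow> real \<Rightarrow> real \<Rightarrow> bool" where
  "L_function L \<beta> R \<longleftrightarrow>
     (\<forall>x>0. L x > 0) \<and>
     (\<forall>x y. 0 < x \<longrightarrow> x < y \<longrightarrow> L y < L x) \<and>
     continuous_on {0<..} L \<and>
     convex_on {0<..} L \<and>
     (L \<longlongrightarrow> 0) at_top \<and>
     0 < \<beta> \<and> \<beta> < 1 \<and> R \<ge> 1 \<and>
     (\<forall>x\<ge>R. L (2 * x) \<ge> \<beta> * L x)"

definition L_set :: "(real \<Rightarrow> real) \<Rightarrow> (nat \<Rightarrow> complex) \<Rightarrow> (nat \<Rightarrow> real) \<Rightarrow> bool" where
  "L_set L z r \<longleftrightarrow>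
     filterlim (\<lambda>n. norm (z n)) at_top sequentially \<and>
     (\<forall>n. r n > 0) \<and>
     summable (\<lambda>n. r n / L (norm (z n)))"

definition Lambda_set :: "(real \<Rightarrow> real) \<Rightarrow> real \<Rightarrow> real \<Rightarrow> real \<Rightarrow> complex set" where
  "Lambda_set L R \<phi> c =
     {z. \<bar>Im (z * cis (-\<phi>))\<bar> \<le> c * L (Re (z * cis (-\<phi>))) \<and> Re (z * cis (-\<phi>)) \<ge> R}"

definition projection_set :: "(nat \<Rightarrow> complex) \<Rightarrow> (nat \<Rightarrow> real) \<Rightarrow> real set" where
  "projection_set z r = (norm ` (\<Union>n. ball (z n) (r n))) \<inter> {1..}"

end

theory Submission
  imports Defs
begin

text \<open>Multiplying by \<open>cis (-\<phi>)\<close> reduces everything to \<open>\<phi> = 0\<close>. To the right of the line \<open>Re w = R\<close> the boundary of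
  \<open>\<Lambda>(L, 0, c)\<close> is the level set \<open>|Im w| / L (Re w) = c\<close>. Hence, once \<open>|z\<^sub>n|\<close> is large,
  the parameters \<open>c \<in> (0, k]\<close> whose boundary meets \<open>D(z\<^sub>n, r\<^sub>n)\<close> form the image of the disc
  under this continuous gauge, an interval. Monotonicity, convexity and the doubling condition
  of \<open>L\<close> bound its length by a constant times \<open>r\<^sub>n / L |z\<^sub>n|\<close>, which is summable, so by
  Borel-Cantelli the bad parameters in \<open>(0, k]\<close> form a null set for every \<open>k\<close>.
  The projection \<open>E\<close> is covered by the intervals \<open>(|z\<^sub>n| - r\<^sub>n, |z\<^sub>n| + r\<^sub>n)\<close>, on which
  \<open>1 / L \<le> 1 / L (|z\<^sub>n| + r\<^sub>n) \<le> 1 / (\<beta> L |z\<^sub>n|)\<close>.\<close>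

lemma L_function_params:
  assumes "L_function L \<beta> R"
  shows "0 < \<beta>" "1 \<le> R"
  using assms by (auto simp: L_function_def)

lemma L_function_pos: "L_function L \<beta> R \<Longrightarrow> 0 < x \<Longrightarrow> 0 < L x"
  by (simp add: L_function_def)

lemma L_function_antimono: "L_function L \<beta> R \<Longrightarrow> 0 < x \<Longrightarrow> x \<le> y \<Longrightarrow> L y \<le> L x"
  unfolding L_function_def by (cases "x = y") (auto simp: less_imp_le)

lemma L_function_shift_ge:
  assumes L: "L_function L \<beta> R" and "R \<le> x" "0 \<le> h" "h \<le> x"
  shows "\<beta> * L x \<le> L (x + h)"
proof -
  have "\<beta> * L x \<le> L (2 * x)"
    using L assms by (simp add: L_function_def)
  also have "\<dots> \<le> L (x + h)"
    using L_function_antimono[OF L] L_function_params[OF L] assms by simp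
  finally show ?thesis .
qed

lemma L_function_decrement_le:
  assumes L: "L_function L \<beta> R" and "0 < a" "a < x" "x < y"
  shows "L x - L y \<le> (y - x) * L a / (y - a)"
proof -
  have "convex_on {0<..} L"
    using L by (simp add: L_function_def)
  then have "(L a - L y) / (a - y) \<le> (L x - L y) / (x - y)"
    using assms by (intro convex_on_slope_le(2)) auto
  then have "(L x - L y) * (y - a) \<le> (L a - L y) * (y - x)"
    using assms by (simp add: divide_simps) (simp add: algebra_simps)
  also have "\<dots> \<le> L a * (y - x)"
    using assms L_function_pos[OF L, of y] by simp
  finally show ?thesis
    using assms by (simp add: divide_simps mult.commute)
qed

lemma L_function_relative_drop_le:
  assumes L: "L_function L \<beta> R" and u: "2 * R \<le> u" "2 * \<rho> < u" and \<rho>: "0 < \<rho>"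
  shows "(L (u - \<rho>) - L (u + \<rho>)) / L (u + \<rho>) \<le> 2 * \<rho> / \<beta>^2"
proof -
  have b: "0 < \<beta>" and R1: "1 \<le> R"
    using L_function_params[OF L] by auto
  have Lh: "0 < L (u / 2)"
    using L_function_pos[OF L] u R1 by simp
  have "L (u - \<rho>) - L (u + \<rho>) \<le> 2 * \<rho> * L (u / 2) / (u / 2 + \<rho>)"
    using L_function_decrement_le[OF L, of "u / 2" "u - \<rho>" "u + \<rho>"] u \<rho> R1 by simp
  also have "\<dots> \<le> 2 * \<rho> * L (u / 2) / (u / 2)"
    using Lh \<rho> u R1 by (intro divide_left_mono) auto
  finally have drop: "L (u - \<rho>) - L (u + \<rho>) \<le> 4 * \<rho> * L (u / 2) / u"
    by simp
  have "\<beta> * L (u / 2) \<le> L u"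
    using L_function_shift_ge[OF L, of "u / 2" "u / 2"] u R1 by simp
  moreover have "\<beta> * L u \<le> L (u + \<rho>)"
    using L_function_shift_ge[OF L, of u \<rho>] u R1 \<rho> by simp
  ultimately have "\<beta>^2 * L (u / 2) \<le> L (u + \<rho>)"
    using b by (simp add: power2_eq_square) (smt (verit) mult_left_mono mult.assoc)
  then have "(L (u - \<rho>) - L (u + \<rho>)) / L (u + \<rho>) \<le> (4 * \<rho> * L (u / 2) / u) / (\<beta>^2 * L (u / 2))"
    using drop b Lh \<rho> u R1 by (intro frac_le) auto
  also have "\<dots> = 4 * \<rho> / (\<beta>^2 * u)"
    using Lh by (simp add: field_simps)
  also have "\<dots> \<le> 2 * \<rho> / \<beta>^2"
    using b \<rho> u R1 by (simp add: divide_simps)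
  finally show ?thesis .
qed

lemma mult_reciprocal_diff_le:
  fixes A B d k a :: real
  assumes B: "0 < B" "B \<le> A" and a: "a \<le> k * A" and k: "0 \<le> k" and d: "(A - B) / B \<le> d"
  shows "a * (1 / B - 1 / A) \<le> k * d"
proof (cases "a \<le> 0")
  case True
  have "a * (1 / B - 1 / A) \<le> 0"
    using True B by (intro mult_nonpos_nonneg) (auto simp: frac_le)
  also have "0 \<le> k * d"
    using k d B by (simp add: order_trans[OF _ d])
  finally show ?thesis .
next
  case False
  have "a * (1 / B - 1 / A) = a / A * ((A - B) / B)"
    using B by (simp add: field_simps)
  also have "\<dots> \<le> k * d"
    using False B a k d by (intro mult_mono) (auto simp: pos_divide_le_eq)
  finally show ?thesis .
qed

lemma L_function_quotient_spread_le:
  assumes L: "L_function L \<beta> R" and k: "0 \<le> k" and \<rho>: "0 < \<rho>" "\<rho> \<le> Z"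
    and u: "2 * R \<le> u" "2 * \<rho> < u" "u \<le> Z" and v: "v - \<rho> \<le> k * L (u - \<rho>)"
  shows "(v + \<rho>) / L (u + \<rho>) - (v - \<rho>) / L (u - \<rho>)
           \<le> (2 / \<beta> + 2 * k * L 1 / \<beta>^2) * \<rho> / L Z"
proof -
  have b: "0 < \<beta>" and R1: "1 \<le> R"
    using L_function_params[OF L] by auto
  define A B where "A = L (u - \<rho>)" and "B = L (u + \<rho>)"
  have A: "0 < A" and B: "0 < B" and LZ: "0 < L Z"
    using L_function_pos[OF L] u \<rho> R1 by (auto simp: A_def B_def)
  have "\<beta> * L Z \<le> L (Z + \<rho>)"
    using L_function_shift_ge[OF L] u \<rho> by simp
  also have "\<dots> \<le> B"
    unfolding B_def using L_function_antimono[OF L] u \<rho> R1 by simp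
  finally have "2 * \<rho> / B \<le> 2 * \<rho> / (\<beta> * L Z)"
    using b B LZ \<rho> by (intro divide_left_mono) auto
  then have first: "2 * \<rho> / B \<le> 2 / \<beta> * \<rho> / L Z"
    by simp
  have drop: "(A - B) / B \<le> 2 * \<rho> / \<beta>^2"
    unfolding A_def B_def by (rule L_function_relative_drop_le[OF L u(1,2) \<rho>(1)])
  have "B \<le> A"
    unfolding A_def B_def using L_function_antimono[OF L] u \<rho> R1 by simp
  then have "(v - \<rho>) * (1 / B - 1 / A) \<le> k * (2 * \<rho> / \<beta>^2)"
    using B v k drop by (intro mult_reciprocal_diff_le) (auto simp: A_def)
  also have "\<dots> \<le> k * (2 * L 1 / \<beta>^2 * \<rho> / L Z)"
  proof -
    have "L Z \<le> L 1"
      using L_function_antimono[OF L] u R1 by simp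
    then have "2 * \<rho> / \<beta>^2 * 1 \<le> 2 * \<rho> / \<beta>^2 * (L 1 / L Z)"
      using LZ \<rho> by (intro mult_left_mono) auto
    then show ?thesis
      using k by (intro mult_left_mono) (auto simp: mult.commute mult.left_commute)
  qed
  finally have second: "(v - \<rho>) * (1 / B - 1 / A) \<le> k * (2 * L 1 / \<beta>^2 * \<rho> / L Z)" .
  have "(v + \<rho>) / B - (v - \<rho>) / A = 2 * \<rho> / B + (v - \<rho>) * (1 / B - 1 / A)"
    using A B by (simp add: field_simps)
  also have "\<dots> \<le> 2 / \<beta> * \<rho> / L Z + k * (2 * L 1 / \<beta>^2 * \<rho> / L Z)"
    using first second by linarith
  also have "\<dots> = (2 / \<beta> + 2 * k * L 1 / \<beta>^2) * \<rho> / L Z"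
    by (simp add: algebra_simps add_divide_distrib)
  finally show ?thesis
    unfolding A_def B_def .
qed

lemma L_set_eventually:
  assumes L: "L_function L \<beta> R" and U: "L_set L z r"
  shows "eventually (\<lambda>n. M \<le> norm (z n) \<and> r n \<le> 1) sequentially"
proof -
  have far: "eventually (\<lambda>n. M' \<le> norm (z n)) sequentially" for M'
    using U by (simp add: L_set_def filterlim_at_top)
  have "(\<lambda>n. r n / L (norm (z n))) \<longlonglongrightarrow> 0"
    using U by (simp add: L_set_def summable_LIMSEQ_zero)
  then have small: "eventually (\<lambda>n. r n / L (norm (z n)) < 1 / L 1) sequentially"
    using L_function_pos[OF L, of 1] by (intro order_tendstoD(2)) auto
  have "eventually (\<lambda>n. r n \<le> 1) sequentially"
    using small far[of 1]
  proof eventually_elim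
    case (elim n)
    have "0 < norm (z n)"
      using elim by linarith
    then have "L 1 * r n < L (norm (z n))"
      using elim L_function_pos[OF L] by (simp add: field_simps)
    also have "\<dots> \<le> L 1"
      using elim L_function_antimono[OF L] by simp
    finally show ?case
      using L_function_pos[OF L, of 1] by (simp add: mult_less_cancel_left1)
  qed
  then show ?thesis
    using far[of M] by eventually_elim simp
qed

lemma nn_integral_projection_set_le:
  assumes L: "L_function L \<beta> R" and r: "\<And>n. 0 < r n"
  shows "(\<integral>\<^sup>+ x. indicator (projection_set z r) x * ennreal (1 / L x) \<partial>lborel)
           \<le> (\<Sum>n. ennreal (2 * r n / L (norm (z n) + r n)))"
proof -
  define I where "I n = {norm (z n) - r n <..< norm (z n) + r n}" for n
  define f where "f n x = ennreal (1 / L (norm (z n) + r n)) * indicator (I n) x" for n x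
  have L_pos: "0 < L (norm (z n) + r n)" for n
    using L_function_pos[OF L] r[of n] by (simp add: add_nonneg_pos)
  have cover: "indicator (projection_set z r) x * ennreal (1 / L x) \<le> (\<Sum>n. f n x)" for x
  proof (cases "x \<in> projection_set z r")
    case True
    then obtain w n where w: "w \<in> ball (z n) (r n)" "x = norm w" "1 \<le> x"
      unfolding projection_set_def by auto
    have "\<bar>norm w - norm (z n)\<bar> < r n"
      using w(1) norm_triangle_ineq3[of w "z n"] by (simp add: dist_norm norm_minus_commute)
    then have x: "x \<in> I n"
      using w by (auto simp: I_def)
    have "L (norm (z n) + r n) \<le> L x"
      using L_function_antimono[OF L] x w(3) by (simp add: I_def)
    then have "ennreal (1 / L x) \<le> f n x"
      using x L_pos[of n] by (simp add: f_def frac_le)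
    also have "\<dots> \<le> (\<Sum>n. f n x)"
      using sum_le_suminf[OF summableI, of "{n}" "\<lambda>n. f n x"] by simp
    finally show ?thesis
      using True by simp
  qed simp
  have "(\<integral>\<^sup>+ x. indicator (projection_set z r) x * ennreal (1 / L x) \<partial>lborel)
          \<le> (\<integral>\<^sup>+ x. (\<Sum>n. f n x) \<partial>lborel)"
    by (intro nn_integral_mono cover)
  also have "\<dots> = (\<Sum>n. \<integral>\<^sup>+ x. f n x \<partial>lborel)"
    by (intro nn_integral_suminf) (simp add: f_def I_def)
  also have "\<dots> = (\<Sum>n. ennreal (2 * r n / L (norm (z n) + r n)))"
  proof (intro suminf_cong)
    fix n
    have "(\<integral>\<^sup>+ x. f n x \<partial>lborel) = ennreal (1 / L (norm (z n) + r n)) * ennreal (2 * r n)"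
      using r[of n] by (simp add: f_def I_def nn_integral_cmult_indicator)
    also have "\<dots> = ennreal (2 * r n / L (norm (z n) + r n))"
      using L_pos[of n] r[of n] by (simp add: ennreal_mult'[symmetric])
    finally show "(\<integral>\<^sup>+ x. f n x \<partial>lborel) = ennreal (2 * r n / L (norm (z n) + r n))" .
  qed
  finally show ?thesis .
qed

lemma summable_L_set_outer:
  assumes L: "L_function L \<beta> R" and U: "L_set L z r"
  shows "summable (\<lambda>n. 2 * r n / L (norm (z n) + r n))"
proof (rule summable_comparison_test_ev)
  show "summable (\<lambda>n. 2 / \<beta> * (r n / L (norm (z n))))"
    using U by (intro summable_mult) (simp add: L_set_def)
  show "eventually (\<lambda>n. norm (2 * r n / L (norm (z n) + r n)) \<le> 2 / \<beta> * (r n / L (norm (z n)))) sequentially"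
    using L_set_eventually[OF L U, of R]
  proof eventually_elim
    case (elim n)
    have b: "0 < \<beta>" and R1: "1 \<le> R" and r: "0 < r n"
      using L_function_params[OF L] U by (auto simp: L_set_def)
    have Lz: "0 < L (norm (z n))" and Lzr: "0 < L (norm (z n) + r n)"
      using elim R1 r by (auto intro!: L_function_pos[OF L])
    have "\<beta> * L (norm (z n)) \<le> L (norm (z n) + r n)"
      using L_function_shift_ge[OF L] elim R1 r by simp
    then have "2 * r n / L (norm (z n) + r n) \<le> 2 * r n / (\<beta> * L (norm (z n)))"
      using b r Lz Lzr by (intro divide_left_mono) auto
    then show ?case
      using r Lzr by simp
  qed
qed

lemma projection_set_integral_finite:
  assumes L: "L_function L \<beta> R" and U: "L_set L z r"
  shows "(\<integral>\<^sup>+ x. indicator (projection_set z r) x * ennreal (1 / L x) \<partial>lborel) < \<infinity>"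
proof -
  have r: "\<And>n. 0 < r n"
    using U by (simp add: L_set_def)
  have "0 \<le> 2 * r n / L (norm (z n) + r n)" for n
    using L_function_pos[OF L, of "norm (z n) + r n"] r[of n] by (simp add: add_nonneg_pos)
  then have "(\<Sum>n. ennreal (2 * r n / L (norm (z n) + r n))) \<noteq> top"
    by (rule ennreal_suminf_neq_top[OF summable_L_set_outer[OF L U]])
  then have "(\<Sum>n. ennreal (2 * r n / L (norm (z n) + r n))) < \<infinity>"
    by (simp add: less_top)
  with nn_integral_projection_set_le[OF L r] show ?thesis
    by (rule order_le_less_trans)
qed

lemma frontier_injective_linear_image:
  fixes f :: "'a::euclidean_space \<Rightarrow> 'a"
  assumes "linear f" "inj f"
  shows "frontier (f ` S) = f ` frontier S"
  using assms
  by (simp add: frontier_def interior_injective_linear_image image_set_diff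
      flip: closure_injective_linear_image)

lemma Lambda_set_0: "Lambda_set L R 0 c = {w. \<bar>Im w\<bar> \<le> c * L (Re w) \<and> R \<le> Re w}"
  by (simp add: Lambda_set_def)

lemma Lambda_set_rotate: "Lambda_set L R \<phi> c = (\<lambda>w. w * cis \<phi>) ` Lambda_set L R 0 c"
proof -
  have mem: "p \<in> Lambda_set L R \<phi> c \<longleftrightarrow> p * cis (-\<phi>) \<in> Lambda_set L R 0 c" for p
    by (simp add: Lambda_set_def)
  have inv: "p * cis (-\<phi>) * cis \<phi> = p" "w * cis \<phi> * cis (-\<phi>) = w" for p w
    by (simp_all add: mult.assoc cis_mult)
  show ?thesis
  proof (intro set_eqI iffI)
    fix p
    assume "p \<in> Lambda_set L R \<phi> c"
    then show "p \<in> (\<lambda>w. w * cis \<phi>) ` Lambda_set L R 0 c"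
      using mem inv(1) by (metis image_eqI)
  next
    fix p
    assume "p \<in> (\<lambda>w. w * cis \<phi>) ` Lambda_set L R 0 c"
    then show "p \<in> Lambda_set L R \<phi> c"
      using mem inv(2) by (metis imageE)
  qed
qed

lemma frontier_Lambda_set_meets_ball_rotate:
  "frontier (Lambda_set L R \<phi> c) \<inter> ball z \<rho> \<noteq> {} \<longleftrightarrow>
   frontier (Lambda_set L R 0 c) \<inter> ball (z * cis (-\<phi>)) \<rho> \<noteq> {}"
proof -
  have "linear (\<lambda>w. w * cis \<phi>)"
    by (intro bounded_linear.linear bounded_linear_mult_left)
  moreover have "inj (\<lambda>w. w * cis \<phi>)"
    by (intro injI) simp
  ultimately have fr: "frontier (Lambda_set L R \<phi> c) = (\<lambda>w. w * cis \<phi>) ` frontier (Lambda_set L R 0 c)"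
    unfolding Lambda_set_rotate[of L R \<phi>] by (rule frontier_injective_linear_image)
  have "dist z (w * cis \<phi>) = dist (z * cis (-\<phi>)) w" for w
  proof -
    have "z - w * cis \<phi> = (z * cis (-\<phi>) - w) * cis \<phi>"
      by (simp add: algebra_simps mult.assoc cis_mult)
    then show ?thesis
      by (simp add: dist_norm norm_mult)
  qed
  then show ?thesis
    unfolding fr by auto
qed

lemma continuous_on_L_Re:
  assumes L: "L_function L \<beta> R" and S: "S \<subseteq> {w. 0 < Re w}"
  shows "continuous_on S (\<lambda>w. L (Re w))"
  by (rule continuous_on_compose2[of "{0<..}" L])
    (use L S in \<open>auto simp: L_function_def intro!: continuous_intros\<close>)

lemma closed_Lambda_set:
  assumes L: "L_function L \<beta> R"
  shows "closed (Lambda_set L R 0 c)"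
proof -
  have "continuous_on {w. R \<le> Re w} (\<lambda>w. \<bar>Im w\<bar> - c * L (Re w))"
    using L_function_params[OF L] by (intro continuous_intros continuous_on_L_Re[OF L]) auto
  then have "closed ({w. R \<le> Re w} \<inter> (\<lambda>w. \<bar>Im w\<bar> - c * L (Re w)) -` {..0})"
    by (intro continuous_closed_preimage closed_halfspace_Re_ge) auto
  moreover have "{w. R \<le> Re w} \<inter> (\<lambda>w. \<bar>Im w\<bar> - c * L (Re w)) -` {..0} = Lambda_set L R 0 c"
    by (auto simp: Lambda_set_0)
  ultimately show ?thesis
    by simp
qed

lemma open_Lambda_set_strict:
  assumes L: "L_function L \<beta> R"
  shows "open {w. R < Re w \<and> \<bar>Im w\<bar> < c * L (Re w)}"
proof -
  have "continuous_on {w. R < Re w} (\<lambda>w. \<bar>Im w\<bar> - c * L (Re w))"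
    using L_function_params[OF L] by (intro continuous_intros continuous_on_L_Re[OF L]) auto
  then have "open ({w. R < Re w} \<inter> (\<lambda>w. \<bar>Im w\<bar> - c * L (Re w)) -` {..<0})"
    by (intro continuous_open_preimage open_halfspace_Re_gt) auto
  moreover have "{w. R < Re w} \<inter> (\<lambda>w. \<bar>Im w\<bar> - c * L (Re w)) -` {..<0}
                   = {w. R < Re w \<and> \<bar>Im w\<bar> < c * L (Re w)}"
    by auto
  ultimately show ?thesis
    by simp
qed

lemma frontier_Lambda_set_subset:
  assumes L: "L_function L \<beta> R" and w: "w \<in> frontier (Lambda_set L R 0 c)"
  shows "R \<le> Re w \<and> \<bar>Im w\<bar> \<le> c * L (Re w)"
  using w closure_closed[OF closed_Lambda_set[OF L]] by (auto simp: frontier_def Lambda_set_0)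

lemma frontier_Lambda_set_iff:
  assumes L: "L_function L \<beta> R" and w: "R < Re w"
  shows "w \<in> frontier (Lambda_set L R 0 c) \<longleftrightarrow> \<bar>Im w\<bar> = c * L (Re w)"
proof
  assume fr: "w \<in> frontier (Lambda_set L R 0 c)"
  have "{w. R < Re w \<and> \<bar>Im w\<bar> < c * L (Re w)} \<subseteq> interior (Lambda_set L R 0 c)"
    by (intro interior_maximal open_Lambda_set_strict[OF L]) (auto simp: Lambda_set_0)
  then have "\<not> \<bar>Im w\<bar> < c * L (Re w)"
    using fr w by (auto simp: frontier_def)
  then show "\<bar>Im w\<bar> = c * L (Re w)"
    using frontier_Lambda_set_subset[OF L fr] by linarith
next
  assume eq: "\<bar>Im w\<bar> = c * L (Re w)"
  have "w \<notin> interior (Lambda_set L R 0 c)"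
  proof
    assume "w \<in> interior (Lambda_set L R 0 c)"
    then obtain \<epsilon> where \<epsilon>: "0 < \<epsilon>" "ball w \<epsilon> \<subseteq> Lambda_set L R 0 c"
      by (meson mem_interior)
    define s :: real where "s = (if 0 \<le> Im w then 1 else -1)"
    define q where "q = w + complex_of_real (s * \<epsilon> / 2) * \<i>"
    have "dist w q = \<epsilon> / 2"
      using \<epsilon> by (simp add: q_def s_def dist_norm norm_mult)
    then have "q \<in> Lambda_set L R 0 c"
      using \<epsilon> by auto
    moreover have "Re q = Re w" and "\<bar>Im q\<bar> = \<bar>Im w\<bar> + \<epsilon> / 2"
      using \<epsilon> by (auto simp: q_def s_def)
    ultimately show False
      using eq \<epsilon> by (simp add: Lambda_set_0)
  qed
  moreover have "w \<in> Lambda_set L R 0 c"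
    using eq w by (simp add: Lambda_set_0)
  ultimately show "w \<in> frontier (Lambda_set L R 0 c)"
    using closure_subset by (auto simp: frontier_def)
qed

definition Lambda_gauge :: "(real \<Rightarrow> real) \<Rightarrow> complex \<Rightarrow> real" where
  "Lambda_gauge L w = \<bar>Im w\<bar> / L (Re w)"

lemma is_interval_Lambda_gauge_image:
  assumes L: "L_function L \<beta> R"
  shows "is_interval (Lambda_gauge L ` (ball z \<rho> \<inter> {w. R < Re w}))"
  unfolding is_interval_connected_1
proof (rule connected_continuous_image)
  have "0 < L (Re w)" if "R < Re w" for w
    using that L_function_params[OF L] by (intro L_function_pos[OF L]) linarith
  then show "continuous_on (ball z \<rho> \<inter> {w. R < Re w}) (Lambda_gauge L)"
    unfolding Lambda_gauge_def using L_function_params[OF L]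
    by (intro continuous_intros continuous_on_L_Re[OF L]) (auto simp: less_imp_neq[symmetric])
  show "connected (ball z \<rho> \<inter> {w. R < Re w})"
    by (intro convex_connected convex_Int convex_ball convex_halfspace_Re_gt)
qed

lemma Lambda_gauge_image_subset:
  assumes L: "L_function L \<beta> R" and \<rho>: "\<rho> < Re z"
  shows "Lambda_gauge L ` ball z \<rho>
           \<subseteq> {(\<bar>Im z\<bar> - \<rho>) / L (Re z - \<rho>) .. (\<bar>Im z\<bar> + \<rho>) / L (Re z + \<rho>)}"
proof clarify
  fix w
  assume "w \<in> ball z \<rho>"
  then have "norm (w - z) < \<rho>"
    by (simp add: dist_norm norm_minus_commute)
  then have re: "\<bar>Re w - Re z\<bar> < \<rho>" and im: "\<bar>\<bar>Im w\<bar> - \<bar>Im z\<bar>\<bar> < \<rho>"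
    using abs_Re_le_cmod[of "w - z"] abs_Im_le_cmod[of "w - z"] by auto
  have pos: "0 < L (Re z - \<rho>)" "0 < L (Re w)" "0 < L (Re z + \<rho>)"
    using L_function_pos[OF L] \<rho> re by auto
  have mono: "L (Re w) \<le> L (Re z - \<rho>)" "L (Re z + \<rho>) \<le> L (Re w)"
    using L_function_antimono[OF L] \<rho> re by auto
  have "(\<bar>Im z\<bar> - \<rho>) / L (Re z - \<rho>) \<le> \<bar>Im w\<bar> / L (Re w)"
  proof (cases "\<bar>Im z\<bar> - \<rho> \<le> 0")
    case True
    then show ?thesis
      using pos by (simp add: divide_nonpos_pos order_trans[of _ 0])
  next
    case False
    have "(\<bar>Im z\<bar> - \<rho>) / L (Re z - \<rho>) \<le> (\<bar>Im z\<bar> - \<rho>) / L (Re w)"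
      using False pos mono by (intro divide_left_mono) auto
    also have "\<dots> \<le> \<bar>Im w\<bar> / L (Re w)"
      using pos im by (intro divide_right_mono) auto
    finally show ?thesis .
  qed
  moreover have "\<bar>Im w\<bar> / L (Re w) \<le> (\<bar>Im z\<bar> + \<rho>) / L (Re w)"
    using pos im by (intro divide_right_mono) auto
  moreover have "\<dots> \<le> (\<bar>Im z\<bar> + \<rho>) / L (Re z + \<rho>)"
    using pos mono im by (intro divide_left_mono) auto
  ultimately show "Lambda_gauge L w
        \<in> {(\<bar>Im z\<bar> - \<rho>) / L (Re z - \<rho>) .. (\<bar>Im z\<bar> + \<rho>) / L (Re z + \<rho>)}"
    by (simp add: Lambda_gauge_def)
qed

lemma norm_centre_less_Lambda:
  assumes L: "L_function L \<beta> R" and p: "p \<in> ball z \<rho>" "R \<le> Re p" "\<bar>Im p\<bar> \<le> c * L (Re p)"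
    and c: "0 \<le> c" "c \<le> k"
  shows "norm z < Re p + k * L R + \<rho>"
proof -
  have R1: "1 \<le> R"
    using L_function_params[OF L] by simp
  have "c * L (Re p) \<le> k * L (Re p)"
    using c L_function_pos[OF L, of "Re p"] p R1 by (intro mult_right_mono) auto
  also have "\<dots> \<le> k * L R"
    using c L_function_antimono[OF L] p R1 by (intro mult_left_mono) auto
  finally have im: "\<bar>Im p\<bar> \<le> k * L R"
    using p by linarith
  have "norm z \<le> norm p + norm (z - p)"
    by (rule norm_triangle_sub)
  also have "norm (z - p) < \<rho>"
    using p by (simp add: dist_norm)
  also have "norm p \<le> \<bar>Re p\<bar> + \<bar>Im p\<bar>"
    by (rule cmod_le)
  finally show ?thesis
    using im p R1 by linarith
qed

lemma Re_centre_large_of_Lambda_gauge: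
  assumes L: "L_function L \<beta> R" and p: "p \<in> ball z \<rho>" "R < Re p" "Lambda_gauge L p \<le> k"
    and \<rho>: "\<rho> \<le> 1" and z: "2 * R + k * L R + 4 \<le> norm z"
  shows "2 * R \<le> Re z \<and> 2 * \<rho> < Re z"
proof -
  have R1: "1 \<le> R"
    using L_function_params[OF L] by simp
  have "0 < L (Re p)"
    using p R1 by (intro L_function_pos[OF L]) linarith
  then have "\<bar>Im p\<bar> = Lambda_gauge L p * L (Re p)" and "0 \<le> Lambda_gauge L p"
    by (simp_all add: Lambda_gauge_def)
  then have "norm z < Re p + k * L R + \<rho>"
    using norm_centre_less_Lambda[OF L p(1) _ _ _ p(3)] p by simp
  moreover have "Re p < Re z + \<rho>"
    using p abs_Re_le_cmod[of "p - z"] by (simp add: dist_norm norm_minus_commute)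
  ultimately show ?thesis
    using z \<rho> R1 by linarith
qed

lemma frontier_Lambda_set_meets_ball_iff:
  assumes L: "L_function L \<beta> R" and c: "0 < c" "c \<le> k" and \<rho>: "\<rho> \<le> 1"
    and z: "R + k * L R + 1 \<le> norm z"
  shows "frontier (Lambda_set L R 0 c) \<inter> ball z \<rho> \<noteq> {}
           \<longleftrightarrow> c \<in> Lambda_gauge L ` (ball z \<rho> \<inter> {w. R < Re w})"
proof
  assume "frontier (Lambda_set L R 0 c) \<inter> ball z \<rho> \<noteq> {}"
  then obtain p where fr: "p \<in> frontier (Lambda_set L R 0 c)" and p: "p \<in> ball z \<rho>"
    by blast
  have "R < Re p"
    using norm_centre_less_Lambda[OF L p _ _ _ c(2)] frontier_Lambda_set_subset[OF L fr] c z \<rho>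
    by force
  moreover from this have "c = Lambda_gauge L p"
    using frontier_Lambda_set_iff[OF L, of p c] fr L_function_pos[OF L, of "Re p"]
      L_function_params[OF L] by (simp add: Lambda_gauge_def)
  ultimately show "c \<in> Lambda_gauge L ` (ball z \<rho> \<inter> {w. R < Re w})"
    using p by blast
next
  assume "c \<in> Lambda_gauge L ` (ball z \<rho> \<inter> {w. R < Re w})"
  then obtain p where p: "p \<in> ball z \<rho>" "R < Re p" and "c = Lambda_gauge L p"
    by blast
  moreover have "0 < L (Re p)"
    using p L_function_params[OF L] by (intro L_function_pos[OF L]) linarith
  ultimately have "p \<in> frontier (Lambda_set L R 0 c)"
    using frontier_Lambda_set_iff[OF L p(2)] by (simp add: Lambda_gauge_def)
  then show "frontier (Lambda_set L R 0 c) \<inter> ball z \<rho> \<noteq> {}"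
    using p by blast
qed

lemma sets_Lambda_gauge_window:
  assumes L: "L_function L \<beta> R"
  shows "Lambda_gauge L ` (ball z \<rho> \<inter> {w. R < Re w}) \<inter> {0<..k} \<in> sets lborel"
proof -
  have "is_interval (Lambda_gauge L ` (ball z \<rho> \<inter> {w. R < Re w}) \<inter> {0<..k})"
    using is_interval_Lambda_gauge_image[OF L] by (intro is_interval_Int) (auto simp: is_interval_1)
  then show ?thesis
    by (simp add: real_interval_borel_measurable)
qed

lemma measure_Lambda_gauge_window_le:
  assumes L: "L_function L \<beta> R" and k: "0 \<le> k" and \<rho>: "0 < \<rho>" "\<rho> \<le> 1"
    and z: "2 * R + k * L R + 4 \<le> norm z"
  shows "measure lborel (Lambda_gauge L ` (ball z \<rho> \<inter> {w. R < Re w}) \<inter> {0<..k})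
           \<le> (2 / \<beta> + 2 * k * L 1 / \<beta>^2) * \<rho> / L (norm z)"
  (is "measure lborel ?W \<le> ?bound")
proof (cases "?W = {}")
  case True
  have "0 \<le> k * L R"
    using k L_function_pos[OF L, of R] L_function_params[OF L] by simp
  then have "0 < norm z"
    using z L_function_params[OF L] by linarith
  then have "0 < L (norm z)"
    by (rule L_function_pos[OF L])
  then have "0 \<le> ?bound"
    using L_function_params[OF L] L_function_pos[OF L, of 1] k \<rho> by simp
  then show ?thesis
    using True by simp
next
  case False
  have R1: "1 \<le> R"
    using L_function_params[OF L] by simp
  define u v where "u = Re z" and "v = \<bar>Im z\<bar>"
  obtain p where p: "p \<in> ball z \<rho>" "R < Re p" and gp: "Lambda_gauge L p \<le> k"
    and W_p: "Lambda_gauge L p \<in> ?W"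
    using False by auto
  have u: "2 * R \<le> u" "2 * \<rho> < u"
    using Re_centre_large_of_Lambda_gauge[OF L p gp \<rho>(2) z] by (simp_all add: u_def)
  define lo hi where "lo = (v - \<rho>) / L (u - \<rho>)" and "hi = (v + \<rho>) / L (u + \<rho>)"
  have W: "?W \<subseteq> {lo..hi}"
    using Lambda_gauge_image_subset[OF L, of \<rho> z] u R1 by (auto simp: u_def v_def lo_def hi_def)
  then have "lo \<le> k" and lo_hi: "lo \<le> hi"
    using W_p gp by auto
  then have v: "v - \<rho> \<le> k * L (u - \<rho>)"
    using L_function_pos[OF L, of "u - \<rho>"] u R1 by (simp add: lo_def pos_divide_le_eq)
  have "u \<le> norm z"
    unfolding u_def by (rule complex_Re_le_cmod)
  then have spread: "hi - lo \<le> ?bound"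
    using L_function_quotient_spread_le[OF L k \<rho>(1) _ u _ v] u \<rho> by (simp add: lo_def hi_def)
  have "measure lborel ?W \<le> measure lborel {lo..hi}"
    using W sets_Lambda_gauge_window[OF L] fmeasurable_cbox[of lo hi]
    by (intro measure_mono_fmeasurable) (auto simp: cbox_interval)
  also have "\<dots> \<le> ?bound"
    using spread lo_hi by simp
  finally show ?thesis .
qed

lemma Lambda_frontier_hits_atMost_eq_limsup:
  assumes L: "L_function L \<beta> R" and U: "L_set L z r"
  shows "{c. 0 < c \<and> infinite {n. frontier (Lambda_set L R 0 c) \<inter> ball (z n) (r n) \<noteq> {}}} \<inter> {..k}
           = limsup (\<lambda>n. Lambda_gauge L ` (ball (z n) (r n) \<inter> {w. R < Re w}) \<inter> {0<..k})"
    (is "?C = limsup ?W")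
proof (intro set_eqI)
  fix c
  show "c \<in> ?C \<longleftrightarrow> c \<in> limsup ?W"
  proof (cases "0 < c \<and> c \<le> k")
    case True
    have "c \<in> limsup ?W \<longleftrightarrow>
            (\<exists>\<^sub>F n in sequentially. frontier (Lambda_set L R 0 c) \<inter> ball (z n) (r n) \<noteq> {})"
      unfolding mem_limsup_iff
    proof (rule frequently_cong[OF L_set_eventually[OF L U, of "R + k * L R + 1"]])
      fix n
      assume "R + k * L R + 1 \<le> norm (z n) \<and> r n \<le> 1"
      then show "c \<in> ?W n \<longleftrightarrow> frontier (Lambda_set L R 0 c) \<inter> ball (z n) (r n) \<noteq> {}"
        using frontier_Lambda_set_meets_ball_iff[OF L, of c k "r n" "z n"] True by auto
    qed
    then show ?thesis
      using True by (simp add: frequently_cofinite flip: cofinite_eq_sequentially)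
  qed (auto simp: mem_limsup_iff)
qed

lemma null_sets_Lambda_frontier_hits_atMost:
  assumes L: "L_function L \<beta> R" and U: "L_set L z r" and k: "0 \<le> k"
  shows "{c. 0 < c \<and> infinite {n. frontier (Lambda_set L R 0 c) \<inter> ball (z n) (r n) \<noteq> {}}} \<inter> {..k}
           \<in> null_sets lborel"
proof -
  define W where "W n = Lambda_gauge L ` (ball (z n) (r n) \<inter> {w. R < Re w}) \<inter> {0<..k}" for n
  define K where "K = 2 / \<beta> + 2 * k * L 1 / \<beta>^2"
  have r: "\<And>n. 0 < r n"
    using U by (simp add: L_set_def)
  have W_sets: "W n \<in> sets lborel" for n
    unfolding W_def by (rule sets_Lambda_gauge_window[OF L])
  have W_finite: "emeasure lborel (W n) < \<infinity>" for n
  proof -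
    have "emeasure lborel (W n) \<le> emeasure lborel {0..k}"
      by (intro emeasure_mono) (auto simp: W_def)
    also have "\<dots> < \<infinity>"
      using k by simp
    finally show ?thesis .
  qed
  have "summable (\<lambda>n. measure lborel (W n))"
  proof (rule summable_comparison_test_ev)
    show "summable (\<lambda>n. K * (r n / L (norm (z n))))"
      using U by (intro summable_mult) (simp add: L_set_def)
    show "eventually (\<lambda>n. norm (measure lborel (W n)) \<le> K * (r n / L (norm (z n)))) sequentially"
      using L_set_eventually[OF L U, of "2 * R + k * L R + 4"]
    proof eventually_elim
      case (elim n)
      then show ?case
        using measure_Lambda_gauge_window_le[OF L k r[of n]] by (simp add: W_def K_def)
    qed
  qed
  then have "limsup W \<in> null_sets lborel"
    by (rule borel_cantelli_limsup1[OF W_sets W_finite])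
  then show ?thesis
    unfolding W_def Lambda_frontier_hits_atMost_eq_limsup[OF L U] .
qed

lemma null_sets_Lambda_frontier_hits:
  assumes L: "L_function L \<beta> R" and U: "L_set L z r"
  shows "{c. 0 < c \<and> infinite {n. frontier (Lambda_set L R 0 c) \<inter> ball (z n) (r n) \<noteq> {}}}
           \<in> null_sets lborel"
    (is "?C \<in> _")
proof -
  have "?C = (\<Union>k::nat. ?C \<inter> {..real k})"
  proof (intro set_eqI)
    fix c :: real
    obtain k :: nat where "c \<le> real k"
      using real_arch_simple by blast
    then show "c \<in> ?C \<longleftrightarrow> c \<in> (\<Union>k::nat. ?C \<inter> {..real k})"
      by auto
  qed
  also have "\<dots> \<in> null_sets lborel"
    by (intro null_sets_UN null_sets_Lambda_frontier_hits_atMost[OF L U]) simp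
  finally show ?thesis .
qed

theorem theorem2:
  fixes L :: "real \<Rightarrow> real" and \<beta> R :: real
    and z :: "nat \<Rightarrow> complex" and r :: "nat \<Rightarrow> real" and \<phi> :: real
  assumes "L_function L \<beta> R"
    and "L_set L z r"
    and "0 \<le> \<phi>" and "\<phi> \<le> 2 * pi"
  shows "{c::real. c > 0 \<and>
            infinite {n. frontier (Lambda_set L R \<phi> c) \<inter> ball (z n) (r n) \<noteq> {}}}
           \<in> null_sets lborel \<and>
         (\<integral>\<^sup>+ x. indicator (projection_set z r) x * ennreal (1 / L x) \<partial>lborel) < \<infinity>"
proof
  have "L_set L (\<lambda>n. z n * cis (-\<phi>)) r"
    using assms(2) by (simp add: L_set_def norm_mult)
  then have "{c. 0 < c \<and> infinite {n. frontier (Lambda_set L R 0 c) \<inter> ball (z n * cis (-\<phi>)) (r n) \<noteq> {}}}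
               \<in> null_sets lborel"
    by (rule null_sets_Lambda_frontier_hits[OF assms(1)])
  then show "{c::real. c > 0 \<and> infinite {n. frontier (Lambda_set L R \<phi> c) \<inter> ball (z n) (r n) \<noteq> {}}}
               \<in> null_sets lborel"
    \<comment> \<open>instantiated at \<open>\<phi>\<close>: the generic rule would rewrite its own right-hand side\<close>
    by (simp only: frontier_Lambda_set_meets_ball_rotate[of L R \<phi>])
  show "(\<integral>\<^sup>+ x. indicator (projection_set z r) x * ennreal (1 / L x) \<partial>lborel) < \<infinity>"
    by (rule projection_set_integral_finite[OF assms(1,2)])
qed

end
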